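(* Let $U\subset\mathbb{R}^2$ be an open neighbourhood of the origin whose closure is diffeomorphic to the closed unit disk, let $V_1:U\to\mathbb{R}$ be smooth, and consider the planar Stark system with Hamiltonian $H(q,p)=\tfrac12|p|^2+V(q)$, $V(q)=-\tfrac{1}{|q|}+V_1(q)$, on $T^*(U\setminus\{0\})$ with the standard symplectic form. Let $c<c_1$ and let $q:S^1\to\mathcal{K}_c^b$ be a periodic orbit of energy $c$ (orbits are allowed to pass through the origin after regularization). Assume that $q$ admits an inverse self-tangency at one point, i.e. there are $t_0\neq t_1$ with $q(t_0)=q(t_1)$ and $\dot q(t_0)=-\lambda\dot q(t_1)$ for some $\lambda>0$. Then every point on the orbit $q$ is an inverse self-tangency. Moreover, either $q$ touches the boundary of the Hill's region $\mathcal{K}_c^b$ or $q$ collides with the origin.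
   Context: $c_1\in\mathbb{R}\cup\{\infty\}$ is an energy such that for every $c<c_1$: $c$ is a regular value of $V$, and the Hill's region $\mathcal{K}_c=\{q\in U: V(q)\le c\}$ contains a unique bounded component $\mathcal{K}_c^b$ whose closure is diffeomorphic to the closed unit disk. Periodic orbits are considered in the regularized system, so that they may pass through the origin (collisions). A point of the orbit is an inverse self-tangency if the orbit passes through it twice with opposite (nonzero) tangent directions. *)

theory Defs
  imports "HOL-Analysis.Analysis"
begin

fun Ck_on :: "nat \<Rightarrow> 'a::real_normed_vector set \<Rightarrow> ('a \<Rightarrow> 'b::real_normed_vector) \<Rightarrow> bool" where
  "Ck_on 0 S f = continuous_on S f"
| "Ck_on (Suc k) S f =
     (\<exists>f'. (\<forall>x\<in>S. (f has_derivative f' x) (at x)) \<and> (\<forall>v. Ck_on k S (\<lambda>x. f' x v)))"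

definition smooth_on :: "'a::real_normed_vector set \<Rightarrow> ('a \<Rightarrow> 'b::real_normed_vector) \<Rightarrow> bool" where
  "smooth_on S f \<longleftrightarrow> (\<forall>k. Ck_on k S f)"

text \<open>Diffeomorphism between (closed) subsets of the plane: smooth maps (in the sense of
  admitting smooth extensions to open neighbourhoods) that are mutually inverse bijections.\<close>
definition diffeomorphic_sets :: "(real^2) set \<Rightarrow> (real^2) set \<Rightarrow> bool" where
  "diffeomorphic_sets S T \<longleftrightarrow>
     (\<exists>f g A B. open A \<and> open B \<and> S \<subseteq> A \<and> T \<subseteq> B \<and>
        smooth_on A f \<and> smooth_on B g \<and> f ` S = T \<and> g ` T = S \<and>
        (\<forall>x\<in>S. g (f x) = x) \<and> (\<forall>y\<in>T. f (g y) = y))"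

definition stark_V :: "(real^2 \<Rightarrow> real) \<Rightarrow> real^2 \<Rightarrow> real" where
  "stark_V V1 x = - 1 / norm x + V1 x"

text \<open>Hill's region K_c = {q in U : V(q) <= c}; the origin (where V = -infinity) is included.\<close>
definition hill_region :: "(real^2) set \<Rightarrow> (real^2 \<Rightarrow> real) \<Rightarrow> real \<Rightarrow> (real^2) set" where
  "hill_region U V1 c = {x \<in> U. x = 0 \<or> stark_V V1 x \<le> c}"

definition regular_value :: "(real^2) set \<Rightarrow> (real^2 \<Rightarrow> real) \<Rightarrow> real \<Rightarrow> bool" where
  "regular_value U V1 c \<longleftrightarrow>
     (\<forall>x\<in>U - {0}. stark_V V1 x = c \<longrightarrow>
        (\<exists>D. (stark_V V1 has_derivative D) (at x) \<and> D \<noteq> (\<lambda>h. 0)))"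

text \<open>The standing assumption on energies below c1.\<close>
definition good_energy :: "(real^2) set \<Rightarrow> (real^2 \<Rightarrow> real) \<Rightarrow> real \<Rightarrow> bool" where
  "good_energy U V1 c \<longleftrightarrow> regular_value U V1 c \<and>
     (\<exists>!C. C \<in> components (hill_region U V1 c) \<and> bounded C) \<and>
     (\<forall>C. C \<in> components (hill_region U V1 c) \<and> bounded C \<longrightarrow>
          diffeomorphic_sets (closure C) (cball 0 1))"

definition hill_bounded :: "(real^2) set \<Rightarrow> (real^2 \<Rightarrow> real) \<Rightarrow> real \<Rightarrow> (real^2) set" where
  "hill_bounded U V1 c = (THE C. C \<in> components (hill_region U V1 c) \<and> bounded C)"

text \<open>A T-periodic orbit of energy c of the (Levi-Civita regularised) Stark system, in
  physical time: q is continuous and T-periodic, collision times are isolated, away from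
  collisions q is C^2 with velocity q' and satisfies Newton's equation q'' = - grad V(q) and
  the energy relation; at a collision the regularised flow reflects the orbit,
  q(t*+s) = q(t*-s).\<close>
definition stark_periodic_orbit ::
  "(real^2) set \<Rightarrow> (real^2 \<Rightarrow> real) \<Rightarrow> real \<Rightarrow> real \<Rightarrow> (real \<Rightarrow> real^2) \<Rightarrow> (real \<Rightarrow> real^2) \<Rightarrow> bool" where
  "stark_periodic_orbit U V1 c T q q' \<longleftrightarrow>
     T > 0 \<and> continuous_on UNIV q \<and> (\<forall>t. q (t + T) = q t) \<and> (\<forall>t. q t \<in> U) \<and>
     (\<forall>t. q t = 0 \<longrightarrow> (\<exists>e>0. \<forall>s. 0 < \<bar>s\<bar> \<and> \<bar>s\<bar> < e \<longrightarrow> q (t + s) \<noteq> 0 \<and> q (t + s) = q (t - s))) \<and>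
     (\<exists>q''. \<forall>t. q t \<noteq> 0 \<longrightarrow>
        (q has_vector_derivative q' t) (at t) \<and>
        (q' has_vector_derivative q'' t) (at t) \<and>
        (stark_V V1 has_derivative (\<lambda>h. - (q'' t \<bullet> h))) (at (q t)) \<and>
        (norm (q' t))\<^sup>2 / 2 + stark_V V1 (q t) = c)"

end

theory Submission
  imports Defs
begin

(* Energy conservation gives the two velocities at an inverse self-tangency the same length,
   so q'(t0) = -q'(t1).  Newton's equation is time-reversible: s \<mapsto> q(t0 + s) and
   s \<mapsto> q(t1 - s) solve the same initial value problem.  Away from the origin the force is
   locally Lipschitz, so a Gronwall estimate makes them agree; at a collision both are reflected.
   Hence q(t0 + t1 - t) = q(t) for all t, and differentiating gives q'(t) = -q'(t0 + t1 - t):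
   every non-collision point is an inverse self-tangency.  At the midpoint (t0 + t1)/2 the
   velocity equals its own negative, so either q collides there or q rests on the level set
   V = c, which, c being a regular value, lies on the boundary of the Hill's region. *)

lemma gronwall_zero:
  fixes w w' :: "real \<Rightarrow> real"
  assumes deriv: "\<And>s. s \<in> {a..b} \<Longrightarrow> (w has_real_derivative w' s) (at s)"
    and growth: "\<And>s. s \<in> {a..b} \<Longrightarrow> w' s \<le> K * w s"
    and nonneg: "\<And>s. s \<in> {a..b} \<Longrightarrow> 0 \<le> w s"
    and start: "w a = 0" and s: "s \<in> {a..b}"
  shows "w s = 0"
proof -
  define z where "z s = exp (- K * s) * w s" for s
  have "z s \<le> z a"
  proof (rule DERIV_nonpos_imp_nonincreasing[of a s z])
    fix x assume "a \<le> x" "x \<le> s"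
    then have x: "x \<in> {a..b}" using s by auto
    have "(z has_real_derivative exp (- K * x) * (w' x - K * w x)) (at x)"
      unfolding z_def using deriv[OF x]
      by (auto intro!: derivative_eq_intros simp: algebra_simps)
    moreover have "exp (- K * x) * (w' x - K * w x) \<le> 0"
      using growth[OF x] by (simp add: mult_nonneg_nonpos)
    ultimately show "\<exists>y. (z has_real_derivative y) (at x) \<and> y \<le> 0" by blast
  qed (use s in auto)
  then have "z s \<le> 0" by (simp add: z_def start)
  then show ?thesis using nonneg[OF s] by (simp add: z_def mult_le_0_iff)
qed

lemma second_order_ode_unique:
  fixes p r :: "real \<Rightarrow> 'a::real_inner"
  assumes G: "L-lipschitz_on X G"
    and inX: "\<And>s. s \<in> {a..b} \<Longrightarrow> p s \<in> X \<and> r s \<in> X"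
    and p: "\<And>s. s \<in> {a..b} \<Longrightarrow>
      (p has_vector_derivative p' s) (at s) \<and> (p' has_vector_derivative - G (p s)) (at s)"
    and r: "\<And>s. s \<in> {a..b} \<Longrightarrow>
      (r has_vector_derivative r' s) (at s) \<and> (r' has_vector_derivative - G (r s)) (at s)"
    and init: "p a = r a" "p' a = r' a" and "s \<in> {a..b}"
  shows "p s = r s"
proof -
  define d where "d s = p s - r s" for s
  define e where "e s = p' s - r' s" for s
  \<comment> \<open>squared phase-space distance; it satisfies \<open>w' \<le> (1 + L) w\<close>\<close>
  define w where "w s = d s \<bullet> d s + e s \<bullet> e s" for s
  have deriv: "(w has_real_derivative 2 * (d s \<bullet> e s) + 2 * (e s \<bullet> (G (r s) - G (p s)))) (at s)"
    if s: "s \<in> {a..b}" for s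
  proof -
    have "(d has_vector_derivative e s) (at s)" "(e has_vector_derivative G (r s) - G (p s)) (at s)"
      unfolding d_def e_def using p[OF s] r[OF s] by (auto intro!: derivative_eq_intros)
    then show ?thesis
      unfolding w_def has_vector_derivative_def has_field_derivative_def
      by (auto intro!: derivative_eq_intros simp: fun_eq_iff inner_commute algebra_simps)
  qed
  have growth: "2 * (d s \<bullet> e s) + 2 * (e s \<bullet> (G (r s) - G (p s))) \<le> (1 + L) * w s"
    if s: "s \<in> {a..b}" for s
  proof -
    have "e s \<bullet> (G (r s) - G (p s)) \<le> norm (e s) * norm (G (r s) - G (p s))"
      by (rule norm_cauchy_schwarz)
    also have "\<dots> \<le> norm (e s) * (L * norm (d s))"
      using lipschitz_on_normD[OF G] inX[OF s]
      by (intro mult_left_mono) (auto simp: d_def norm_minus_commute)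
    finally have "e s \<bullet> (G (r s) - G (p s)) \<le> L * (norm (d s) * norm (e s))"
      by (simp add: algebra_simps)
    moreover have "d s \<bullet> e s \<le> norm (d s) * norm (e s)" by (rule norm_cauchy_schwarz)
    moreover have nw: "2 * (norm (d s) * norm (e s)) \<le> w s"
      using sum_squares_bound[of "norm (d s)" "norm (e s)"]
      by (simp add: w_def power2_norm_eq_inner[symmetric] power2_eq_square)
    moreover have "L * (2 * (norm (d s) * norm (e s))) \<le> L * w s"
      using nw lipschitz_on_nonneg[OF G] by (rule mult_left_mono)
    ultimately show ?thesis by (simp add: algebra_simps)
  qed
  have "w s = 0"
    by (rule gronwall_zero[OF deriv growth _ _ \<open>s \<in> {a..b}\<close>]) (auto simp: w_def d_def e_def init)
  then show ?thesis by (simp add: w_def d_def add_nonneg_eq_0_iff)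
qed

lemma C1_lipschitz_on_cball:
  fixes G :: "'a::euclidean_space \<Rightarrow> 'b::real_normed_vector"
  assumes S: "open S" "x \<in> S"
    and deriv: "\<And>y. y \<in> S \<Longrightarrow> (G has_derivative G' y) (at y)"
    and cont: "\<And>h. continuous_on S (\<lambda>y. G' y h)"
  shows "\<exists>e>0. \<exists>L. cball x e \<subseteq> S \<and> L-lipschitz_on (cball x e) G"
proof -
  obtain e where e: "e > 0" "cball x e \<subseteq> S" using S open_contains_cball by blast
  have "continuous_on (cball x e) (\<lambda>y. \<Sum>i\<in>Basis. norm (G' y i))"
    using e(2) by (intro continuous_intros continuous_on_subset[OF cont])
  then have "bounded ((\<lambda>y. \<Sum>i\<in>Basis. norm (G' y i)) ` cball x e)"
    by (intro compact_imp_bounded compact_continuous_image) auto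
  then obtain B where "\<forall>y\<in>cball x e. norm (\<Sum>i\<in>Basis. norm (G' y i)) \<le> B"
    unfolding bounded_iff by auto
  then have B: "\<And>y. y \<in> cball x e \<Longrightarrow> (\<Sum>i\<in>Basis. norm (G' y i)) \<le> B"
    by (metis abs_le_D1 real_norm_def)
  have "B-lipschitz_on (cball x e) G"
  proof (rule bounded_derivative_imp_lipschitz)
    fix y assume y: "y \<in> cball x e"
    then show "(G has_derivative G' y) (at y within cball x e)"
      using deriv e(2) has_derivative_at_withinI by blast
    have "bounded_linear (G' y)"
      using deriv y e(2) has_derivative_bounded_linear by blast
    then have "onorm (G' y) \<le> (\<Sum>i\<in>Basis. norm (G' y i))"
      by (rule onorm_componentwise)
    then show "onorm (G' y) \<le> B" using B[OF y] by linarith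
  next
    have "0 \<le> (\<Sum>i\<in>Basis. norm (G' x i))" by (simp add: sum_nonneg)
    then show "0 \<le> B" using B[of x] e(1) by simp
  qed simp
  then show ?thesis using e by blast
qed

lemma second_order_ode_unique_near:
  fixes p r :: "real \<Rightarrow> 'a::real_inner"
  assumes G: "L-lipschitz_on (cball x e) G" and "0 < e"
    and cont: "continuous_on UNIV p" "continuous_on UNIV r"
    and p: "\<And>s. p s \<in> cball x e \<Longrightarrow>
      (p has_vector_derivative p' s) (at s) \<and> (p' has_vector_derivative - G (p s)) (at s)"
    and r: "\<And>s. r s \<in> cball x e \<Longrightarrow>
      (r has_vector_derivative r' s) (at s) \<and> (r' has_vector_derivative - G (r s)) (at s)"
    and init: "p \<sigma> = x" "r \<sigma> = x" "p' \<sigma> = r' \<sigma>"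
  shows "\<exists>\<delta>>0. \<forall>s\<in>{\<sigma>..\<sigma>+\<delta>}. p s = r s"
proof -
  obtain d1 where d1: "d1 > 0" "\<And>s. dist s \<sigma> < d1 \<Longrightarrow> dist (p s) x < e"
    using cont(1) \<open>0 < e\<close> init(1) unfolding continuous_on_iff by blast
  obtain d2 where d2: "d2 > 0" "\<And>s. dist s \<sigma> < d2 \<Longrightarrow> dist (r s) x < e"
    using cont(2) \<open>0 < e\<close> init(2) unfolding continuous_on_iff by blast
  define \<delta> where "\<delta> = min d1 d2 / 2"
  have near: "p s \<in> cball x e \<and> r s \<in> cball x e" if "s \<in> {\<sigma>..\<sigma>+\<delta>}" for s
    using that d1 d2 by (auto simp: \<delta>_def dist_real_def dist_commute intro: less_imp_le)
  have "p s = r s" if "s \<in> {\<sigma>..\<sigma>+\<delta>}" for s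
  proof (rule second_order_ode_unique[OF G near])
    show "(p has_vector_derivative p' s) (at s) \<and> (p' has_vector_derivative - G (p s)) (at s)"
      if "s \<in> {\<sigma>..\<sigma>+\<delta>}" for s
      using near[OF that] by (intro p) simp
    show "(r has_vector_derivative r' s) (at s) \<and> (r' has_vector_derivative - G (r s)) (at s)"
      if "s \<in> {\<sigma>..\<sigma>+\<delta>}" for s
      using near[OF that] by (intro r) simp
  qed (use init that in auto)
  moreover have "\<delta> > 0" using d1 d2 by (simp add: \<delta>_def)
  ultimately show ?thesis by auto
qed

lemma has_vector_derivative_shift:
  assumes "(f has_vector_derivative f') (at (a + s))"
  shows "((\<lambda>s. f (a + s)) has_vector_derivative f') (at s)"
proof -
  have "((\<lambda>s. a + s) has_vector_derivative 1) (at s)" by (auto intro!: derivative_eq_intros)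
  from vector_diff_chain_at[OF this] assms show ?thesis by (simp add: o_def)
qed

lemma has_vector_derivative_reflect:
  assumes "(f has_vector_derivative f') (at (b - s))"
  shows "((\<lambda>s. f (b - s)) has_vector_derivative - f') (at s)"
proof -
  have "((\<lambda>s. b - s) has_vector_derivative - 1) (at s)" by (auto intro!: derivative_eq_intros)
  from vector_diff_chain_at[OF this] assms show ?thesis by (simp add: o_def)
qed

lemma vector_derivative_unique_left:
  assumes "a < \<sigma>" and eq: "\<And>s. s \<in> {a..\<sigma>} \<Longrightarrow> p s = r s"
    and "(p has_vector_derivative u) (at \<sigma>)" "(r has_vector_derivative v) (at \<sigma>)"
  shows "u = v"
proof (rule vector_derivative_unique_within)
  show "at \<sigma> within {a..\<sigma>} \<noteq> bot" using \<open>a < \<sigma>\<close> by (simp add: at_within_Icc_at_left)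
  have "(p has_vector_derivative u) (at \<sigma> within {a..\<sigma>})"
    using assms(3) by (rule has_vector_derivative_at_within)
  then show "(r has_vector_derivative u) (at \<sigma> within {a..\<sigma>})"
    by (rule has_vector_derivative_transform[rotated 2]) (use eq \<open>a < \<sigma>\<close> in auto)
  show "(r has_vector_derivative v) (at \<sigma> within {a..\<sigma>})"
    using assms(4) by (rule has_vector_derivative_at_within)
qed

lemma eq_on_halfline_by_continuation:
  fixes p r :: "real \<Rightarrow> 'b::t2_space"
  assumes cont: "continuous_on UNIV p" "continuous_on UNIV r" and "p 0 = r 0"
    and step: "\<And>\<sigma>. 0 \<le> \<sigma> \<Longrightarrow> \<forall>s\<in>{0..\<sigma>}. p s = r s \<Longrightarrow>
      \<exists>\<delta>>0. \<forall>s\<in>{\<sigma>..\<sigma>+\<delta>}. p s = r s"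
    and "0 \<le> t"
  shows "p t = r t"
proof (rule ccontr)
  assume "p t \<noteq> r t"
  define A where "A = {s. 0 \<le> s \<and> p s \<noteq> r s}"
  define \<sigma> where "\<sigma> = Inf A"
  have A: "t \<in> A" "bdd_below A" using \<open>p t \<noteq> r t\<close> \<open>0 \<le> t\<close> by (auto simp: A_def bdd_below_def)
  then have "0 \<le> \<sigma>" unfolding \<sigma>_def by (intro cInf_greatest) (auto simp: A_def)
  have below: "p s = r s" if "0 \<le> s" "s < \<sigma>" for s
    using cInf_lower[OF _ A(2), of s] that by (auto simp: A_def \<sigma>_def)
  have "p \<sigma> = r \<sigma>"
  proof (cases "\<sigma> = 0")
    case False
    have "closure {0..<\<sigma>} \<subseteq> {s. p s = r s}"
      using below closed_Collect_eq[OF cont] by (intro closure_minimal) auto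
    then show ?thesis using False \<open>0 \<le> \<sigma>\<close> by auto
  qed (use \<open>p 0 = r 0\<close> in simp)
  then have "\<forall>s\<in>{0..\<sigma>}. p s = r s" using below by (auto simp: order_le_less)
  then obtain \<delta> where "\<delta> > 0" and ext: "\<forall>s\<in>{\<sigma>..\<sigma>+\<delta>}. p s = r s"
    using step \<open>0 \<le> \<sigma>\<close> by blast
  then obtain s where "s \<in> A" "s < \<sigma> + \<delta>"
    using cInf_less_iff[of A "\<sigma> + \<delta>"] A unfolding \<sigma>_def by auto
  moreover have "\<sigma> \<le> s" using \<open>s \<in> A\<close> A(2) unfolding \<sigma>_def by (rule cInf_lower)
  ultimately show False using ext by (auto simp: A_def)
qed

lemma periodic_int_multiple:
  fixes f :: "real \<Rightarrow> 'a"
  assumes per: "\<And>t. f (t + T) = f t"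
  shows "f (t + of_int k * T) = f t"
proof (induction k rule: int_induct[where k=0])
  case (step1 i)
  then show ?case using per[of "t + of_int i * T"] by (simp add: algebra_simps)
next
  case (step2 i)
  then show ?case using per[of "t + of_int (i - 1) * T"] by (simp add: algebra_simps)
qed simp

lemma vector_derivative_periodic:
  assumes "\<And>x. f (x + d) = f x"
    and "(f has_vector_derivative u) (at t)" "(f has_vector_derivative v) (at (t + d))"
  shows "u = v"
proof -
  have "((\<lambda>x. f (d + x)) has_vector_derivative v) (at t)"
    using assms(3) by (intro has_vector_derivative_shift) (simp add: add.commute)
  then show ?thesis using assms(1,2) by (simp add: add.commute vector_derivative_unique_at)
qed

lemma vector_derivative_reflect_symmetric:
  assumes "\<And>x. f (c - x) = f x"
    and "(f has_vector_derivative u) (at t)" "(f has_vector_derivative v) (at (c - t))"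
  shows "u = - v"
proof -
  have "((\<lambda>x. f (c - x)) has_vector_derivative - v) (at t)"
    using assms(3) by (rule has_vector_derivative_reflect)
  then show ?thesis using assms(1,2) by (simp add: vector_derivative_unique_at)
qed

lemma inner_has_derivative_unique:
  assumes "(f has_derivative (\<lambda>h. u \<bullet> h)) (at x)" "(f has_derivative (\<lambda>h. v \<bullet> h)) (at x)"
  shows "u = v"
proof -
  have "(\<lambda>h. u \<bullet> h) = (\<lambda>h. v \<bullet> h)" using assms by (rule has_derivative_unique)
  then have "(u - v) \<bullet> (u - v) = 0" by (metis inner_diff_left right_minus_eq)
  then show ?thesis by simp
qed

lemma linear_eq_inner_sum_Basis:
  fixes f :: "'a::euclidean_space \<Rightarrow> real"
  assumes "linear f"
  shows "f h = (\<Sum>i\<in>Basis. f i *\<^sub>R i) \<bullet> h"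
proof -
  have "f h = f (\<Sum>i\<in>Basis. (h \<bullet> i) *\<^sub>R i)" by (simp add: euclidean_representation)
  also have "\<dots> = (\<Sum>i\<in>Basis. f i * (i \<bullet> h))"
    using assms by (simp add: linear_sum linear_scale inner_commute mult.commute)
  also have "\<dots> = (\<Sum>i\<in>Basis. f i *\<^sub>R i) \<bullet> h"
    by (simp add: inner_sum_left)
  finally show ?thesis .
qed

lemma C2_gradient_C1:
  fixes f :: "'a::euclidean_space \<Rightarrow> real"
  assumes "Ck_on 2 S f"
  shows "\<exists>g g'. (\<forall>x\<in>S. (f has_derivative (\<lambda>h. g x \<bullet> h)) (at x)) \<and>
    (\<forall>x\<in>S. (g has_derivative g' x) (at x)) \<and> (\<forall>h. continuous_on S (\<lambda>x. g' x h))"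
proof -
  obtain f' where f': "\<And>x. x \<in> S \<Longrightarrow> (f has_derivative f' x) (at x)"
    and f'': "\<forall>v. \<exists>D. (\<forall>x\<in>S. ((\<lambda>x. f' x v) has_derivative D x) (at x)) \<and>
      (\<forall>w. continuous_on S (\<lambda>x. D x w))"
    using assms unfolding numeral_2_eq_2 Ck_on.simps by blast
  obtain D where D: "\<And>v x. x \<in> S \<Longrightarrow> ((\<lambda>x. f' x v) has_derivative D v x) (at x)"
    and cont: "\<And>v w. continuous_on S (\<lambda>x. D v x w)"
    using choice[OF f''] by blast
  define g where "g x = (\<Sum>i\<in>Basis. f' x i *\<^sub>R i)" for x
  define g' where "g' x h = (\<Sum>i\<in>Basis. D i x h *\<^sub>R i)" for x h
  have "(f has_derivative (\<lambda>h. g x \<bullet> h)) (at x)" if "x \<in> S" for x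
  proof -
    have "f' x = (\<lambda>h. g x \<bullet> h)"
      unfolding g_def using has_derivative_linear[OF f'[OF that]]
      by (intro ext linear_eq_inner_sum_Basis)
    then show ?thesis using f'[OF that] by simp
  qed
  moreover have "(g has_derivative g' x) (at x)" if "x \<in> S" for x
    unfolding g_def g'_def using that by (intro has_derivative_sum has_derivative_scaleR_left D)
  moreover have "continuous_on S (\<lambda>x. g' x h)" for h
    unfolding g'_def by (intro continuous_intros cont)
  ultimately show ?thesis by blast
qed

lemma has_derivative_neg_inverse_norm:
  fixes x :: "'a::real_inner"
  assumes "x \<noteq> 0"
  shows "((\<lambda>x. - 1 / norm x) has_derivative (\<lambda>h. (inverse (norm x ^ 3) *\<^sub>R x) \<bullet> h)) (at x)"
proof -
  have "((\<lambda>x. - inverse (norm x)) has_derivative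
      (\<lambda>h. inverse (norm x) * (h \<bullet> sgn x) * inverse (norm x))) (at x)"
    using assms by (auto intro!: derivative_eq_intros has_derivative_norm)
  moreover have "(\<lambda>h. inverse (norm x) * (h \<bullet> sgn x) * inverse (norm x)) =
      (\<lambda>h. (inverse (norm x ^ 3) *\<^sub>R x) \<bullet> h)"
    using assms by (auto simp: fun_eq_iff sgn_div_norm field_simps inner_commute power3_eq_cube)
  ultimately show ?thesis by (simp add: divide_inverse)
qed

lemma has_derivative_inverse_norm_cube_scaled:
  fixes x :: "'a::real_inner"
  assumes "x \<noteq> 0"
  shows "((\<lambda>x. inverse (norm x ^ 3) *\<^sub>R x) has_derivative
     (\<lambda>h. inverse (norm x ^ 3) *\<^sub>R h - (3 * (h \<bullet> x) / norm x ^ 5) *\<^sub>R x)) (at x)"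
proof -
  have "((\<lambda>x. inverse (norm x ^ 3) *\<^sub>R x) has_derivative
     (\<lambda>h. inverse (norm x ^ 3) *\<^sub>R h -
       (inverse (norm x ^ 3) * (3 * (h \<bullet> sgn x) * norm x ^ 2) * inverse (norm x ^ 3)) *\<^sub>R x)) (at x)"
    using assms by (auto intro!: derivative_eq_intros has_derivative_norm)
  then show ?thesis
    by (rule has_derivative_eq_rhs)
      (use assms in \<open>auto simp: fun_eq_iff sgn_div_norm field_simps eval_nat_numeral\<close>)
qed

lemma stark_V_gradient_locally_lipschitz:
  assumes U: "open U" and V1: "smooth_on U V1"
  shows "\<exists>G. (\<forall>x\<in>U - {0}. (stark_V V1 has_derivative (\<lambda>h. G x \<bullet> h)) (at x)) \<and>
    (\<forall>x\<in>U - {0}. \<exists>e>0. \<exists>L. cball x e \<subseteq> U - {0} \<and> L-lipschitz_on (cball x e) G)"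
proof -
  have "Ck_on 2 U V1" using V1 by (simp add: smooth_on_def)
  then obtain g g' where g: "\<And>x. x \<in> U \<Longrightarrow> (V1 has_derivative (\<lambda>h. g x \<bullet> h)) (at x)"
    and g': "\<And>x. x \<in> U \<Longrightarrow> (g has_derivative g' x) (at x)"
    and cont: "\<And>h. continuous_on U (\<lambda>x. g' x h)"
    using C2_gradient_C1 by blast
  define G where "G x = inverse (norm x ^ 3) *\<^sub>R x + g x" for x :: "real^2"
  define G' where "G' x h = inverse (norm x ^ 3) *\<^sub>R h - (3 * (h \<bullet> x) / norm x ^ 5) *\<^sub>R x + g' x h"
    for x h :: "real^2"
  have "(stark_V V1 has_derivative (\<lambda>h. G x \<bullet> h)) (at x)" if "x \<in> U - {0}" for x
    using has_derivative_add[OF has_derivative_neg_inverse_norm g, of x] that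
    by (simp add: stark_V_def[abs_def] G_def inner_add_left)
  moreover have "\<exists>e>0. \<exists>L. cball x e \<subseteq> U - {0} \<and> L-lipschitz_on (cball x e) G" if "x \<in> U - {0}" for x
  proof (rule C1_lipschitz_on_cball)
    show "open (U - {0})" using U by (simp add: open_delete)
    show "(G has_derivative G' y) (at y)" if "y \<in> U - {0}" for y
      unfolding G_def G'_def using that
      by (intro has_derivative_add has_derivative_inverse_norm_cube_scaled g') auto
    show "continuous_on (U - {0}) (\<lambda>y. G' y h)" for h
      unfolding G'_def using continuous_on_subset[OF cont]
      by (intro continuous_intros) auto
  qed (use that in simp)
  ultimately show ?thesis by blast
qed

locale reflected_newton_orbit =
  fixes G :: "'a::real_inner \<Rightarrow> 'a" and q q' :: "real \<Rightarrow> 'a"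
  assumes continuous: "continuous_on UNIV q"
    and reflection: "\<And>t. q t = 0 \<Longrightarrow> \<exists>e>0. \<forall>s. 0 < \<bar>s\<bar> \<and> \<bar>s\<bar> < e \<longrightarrow> q (t + s) = q (t - s)"
    and newton: "\<And>t. q t \<noteq> 0 \<Longrightarrow>
      (q has_vector_derivative q' t) (at t) \<and> (q' has_vector_derivative - G (q t)) (at t)"
    and lipschitz: "\<And>t. q t \<noteq> 0 \<Longrightarrow> \<exists>e>0. \<exists>L. 0 \<notin> cball (q t) e \<and> L-lipschitz_on (cball (q t) e) G"
begin

lemma shifted_newton:
  assumes "q (a + s) \<noteq> 0"
  shows "((\<lambda>s. q (a + s)) has_vector_derivative q' (a + s)) (at s) \<and>
    ((\<lambda>s. q' (a + s)) has_vector_derivative - G (q (a + s))) (at s)"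
  using newton[OF assms] by (auto intro: has_vector_derivative_shift)

lemma reversed_newton:
  assumes "q (b - s) \<noteq> 0"
  shows "((\<lambda>s. q (b - s)) has_vector_derivative - q' (b - s)) (at s) \<and>
    ((\<lambda>s. - q' (b - s)) has_vector_derivative - G (q (b - s))) (at s)"
proof -
  have q: "(q has_vector_derivative q' (b - s)) (at (b - s))"
    and q': "(q' has_vector_derivative - G (q (b - s))) (at (b - s))"
    using newton[OF assms] by auto
  have "((\<lambda>s. q' (b - s)) has_vector_derivative - (- G (q (b - s)))) (at s)"
    using q' by (rule has_vector_derivative_reflect)
  then have "((\<lambda>s. - q' (b - s)) has_vector_derivative - G (q (b - s))) (at s)"
    using has_vector_derivative_minus by fastforce
  with has_vector_derivative_reflect[OF q] show ?thesis by simp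
qed

lemma reversal_step_regular:
  assumes "q' a = - q' b" "0 \<le> \<sigma>" and eq: "\<forall>s\<in>{0..\<sigma>}. q (a + s) = q (b - s)"
    and "q (a + \<sigma>) \<noteq> 0"
  shows "\<exists>\<delta>>0. \<forall>s\<in>{\<sigma>..\<sigma>+\<delta>}. q (a + s) = q (b - s)"
proof -
  obtain e L where e: "e > 0" "0 \<notin> cball (q (a + \<sigma>)) e"
    and G: "L-lipschitz_on (cball (q (a + \<sigma>)) e) G"
    using lipschitz[OF \<open>q (a + \<sigma>) \<noteq> 0\<close>] by blast
  have "q (b - \<sigma>) = q (a + \<sigma>)" using eq \<open>0 \<le> \<sigma>\<close> by simp
  have "q' (a + \<sigma>) = - q' (b - \<sigma>)"
  proof (cases "\<sigma> = 0")
    case False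
    have "((\<lambda>s. q (a + s)) has_vector_derivative q' (a + \<sigma>)) (at \<sigma>)"
      using shifted_newton[OF \<open>q (a + \<sigma>) \<noteq> 0\<close>] by blast
    moreover have "((\<lambda>s. q (b - s)) has_vector_derivative - q' (b - \<sigma>)) (at \<sigma>)"
      using reversed_newton \<open>q (b - \<sigma>) = q (a + \<sigma>)\<close> \<open>q (a + \<sigma>) \<noteq> 0\<close> by metis
    ultimately show ?thesis
      by (rule vector_derivative_unique_left[rotated 2]) (use False \<open>0 \<le> \<sigma>\<close> eq in auto)
  qed (use assms in simp)
  moreover have "continuous_on UNIV (\<lambda>s. q (a + s))" "continuous_on UNIV (\<lambda>s. q (b - s))"
    by (auto intro!: continuous_on_compose2[OF continuous] continuous_intros)
  ultimately show ?thesis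
  proof (intro second_order_ode_unique_near[where p'="\<lambda>s. q' (a + s)" and r'="\<lambda>s. - q' (b - s)",
        OF G \<open>e > 0\<close>])
    show "((\<lambda>s. q (a + s)) has_vector_derivative q' (a + s)) (at s) \<and>
        ((\<lambda>s. q' (a + s)) has_vector_derivative - G (q (a + s))) (at s)"
      if "q (a + s) \<in> cball (q (a + \<sigma>)) e" for s
      using that e(2) by (intro shifted_newton) auto
    show "((\<lambda>s. q (b - s)) has_vector_derivative - q' (b - s)) (at s) \<and>
        ((\<lambda>s. - q' (b - s)) has_vector_derivative - G (q (b - s))) (at s)"
      if "q (b - s) \<in> cball (q (a + \<sigma>)) e" for s
      using that e(2) by (intro reversed_newton) auto
  qed (use \<open>q (b - \<sigma>) = q (a + \<sigma>)\<close> in auto)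
qed

lemma reversal_step_collision:
  assumes "0 < \<sigma>" and eq: "\<forall>s\<in>{0..\<sigma>}. q (a + s) = q (b - s)" and "q (a + \<sigma>) = 0"
  shows "\<exists>\<delta>>0. \<forall>s\<in>{\<sigma>..\<sigma>+\<delta>}. q (a + s) = q (b - s)"
proof -
  obtain e1 where e1: "e1 > 0" "\<And>u. 0 < \<bar>u\<bar> \<and> \<bar>u\<bar> < e1 \<Longrightarrow> q (a + \<sigma> + u) = q (a + \<sigma> - u)"
    using reflection[OF \<open>q (a + \<sigma>) = 0\<close>] by blast
  have "q (b - \<sigma>) = 0" using eq assms by auto
  then obtain e2 where e2: "e2 > 0" "\<And>u. 0 < \<bar>u\<bar> \<and> \<bar>u\<bar> < e2 \<Longrightarrow> q (b - \<sigma> + u) = q (b - \<sigma> - u)"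
    using reflection by blast
  \<comment> \<open>Both curves bounce back at the collision, so agreement before \<open>\<sigma>\<close> carries over past it.\<close>
  define \<delta> where "\<delta> = min (min e1 e2) \<sigma> / 2"
  have "q (a + s) = q (b - s)" if s: "s \<in> {\<sigma>..\<sigma>+\<delta>}" for s
  proof (cases "s = \<sigma>")
    case False
    define u where "u = s - \<sigma>"
    have u: "0 < u" "u < e1" "u < e2" "u < \<sigma>" using s False e1 e2 \<open>0 < \<sigma>\<close> by (auto simp: u_def \<delta>_def)
    have "q (a + s) = q (a + \<sigma> - u)" using e1(2)[of u] u by (simp add: u_def)
    also have "\<dots> = q (b - (\<sigma> - u))"
      using eq[rule_format, of "\<sigma> - u"] u by (simp add: add_diff_eq)
    also have "\<dots> = q (b - \<sigma> + u)" by (simp add: algebra_simps)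
    also have "\<dots> = q (b - s)" using e2(2)[of u] u by (simp add: u_def)
    finally show ?thesis .
  qed (use eq \<open>0 < \<sigma>\<close> in auto)
  moreover have "\<delta> > 0" using e1 e2 \<open>0 < \<sigma>\<close> by (simp add: \<delta>_def)
  ultimately show ?thesis by auto
qed

lemma reversal_halfline:
  assumes "q a = q b" "q b \<noteq> 0" "q' a = - q' b" "0 \<le> s"
  shows "q (a + s) = q (b - s)"
proof (rule eq_on_halfline_by_continuation[of "\<lambda>s. q (a + s)" "\<lambda>s. q (b - s)"])
  show "continuous_on UNIV (\<lambda>s. q (a + s))" "continuous_on UNIV (\<lambda>s. q (b - s))"
    by (auto intro!: continuous_on_compose2[OF continuous] continuous_intros)
  fix \<sigma> :: real assume "0 \<le> \<sigma>" and eq: "\<forall>s\<in>{0..\<sigma>}. q (a + s) = q (b - s)"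
  show "\<exists>\<delta>>0. \<forall>s\<in>{\<sigma>..\<sigma>+\<delta>}. q (a + s) = q (b - s)"
  proof (cases "q (a + \<sigma>) = 0")
    case True
    then have "\<sigma> \<noteq> 0" using assms by auto
    then show ?thesis using reversal_step_collision[OF _ eq True] \<open>0 \<le> \<sigma>\<close> by simp
  qed (use reversal_step_regular[OF assms(3) \<open>0 \<le> \<sigma>\<close> eq] in blast)
qed (use assms in simp_all)

lemma reversal_symmetry:
  assumes "q a = q b" "q b \<noteq> 0" "q' a = - q' b"
  shows "q (a + b - t) = q t"
proof (cases "a \<le> t")
  case True
  then show ?thesis using reversal_halfline[OF assms, of "t - a"] by (simp add: algebra_simps)
next
  case False
  then have "q (b + (a - t)) = q (a - (a - t))"
    using assms by (intro reversal_halfline) auto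
  then show ?thesis by (simp add: algebra_simps)
qed

lemma reversal_midpoint_at_rest:
  assumes "q a = q b" "q b \<noteq> 0" "q' a = - q' b" and "q ((a + b) / 2) \<noteq> 0"
  shows "q' ((a + b) / 2) = 0"
proof -
  have "q' ((a + b) / 2) = - q' (a + b - (a + b) / 2)"
    using newton reversal_symmetry[OF assms(1-3)] assms(4)
    by (intro vector_derivative_reflect_symmetric[where f=q]) auto
  also have "a + b - (a + b) / 2 = (a + b) / 2"
    using field_sum_of_halves[of "a + b"] by (metis add_diff_cancel_right')
  finally show ?thesis by (simp add: eq_neg_iff_add_eq_0 flip: scaleR_2)
qed

end

lemma stark_periodic_orbit_reflected_newton:
  assumes "open U" "smooth_on U V1" and orbit: "stark_periodic_orbit U V1 c T q q'"
  shows "\<exists>G. reflected_newton_orbit G q q'"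
proof -
  obtain G where dV: "\<And>x. x \<in> U - {0} \<Longrightarrow> (stark_V V1 has_derivative (\<lambda>h. G x \<bullet> h)) (at x)"
    and lip: "\<And>x. x \<in> U - {0} \<Longrightarrow> \<exists>e>0. \<exists>L. cball x e \<subseteq> U - {0} \<and> L-lipschitz_on (cball x e) G"
    using stark_V_gradient_locally_lipschitz[OF assms(1,2)] by blast
  have inU: "\<And>t. q t \<in> U" and cont: "continuous_on UNIV q"
    and refl: "\<And>t. q t = 0 \<Longrightarrow>
      \<exists>e>0. \<forall>s. 0 < \<bar>s\<bar> \<and> \<bar>s\<bar> < e \<longrightarrow> q (t + s) \<noteq> 0 \<and> q (t + s) = q (t - s)"
    using orbit unfolding stark_periodic_orbit_def by blast+
  obtain q'' where q'': "\<And>t. q t \<noteq> 0 \<Longrightarrow> (q has_vector_derivative q' t) (at t) \<and>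
      (q' has_vector_derivative q'' t) (at t) \<and>
      (stark_V V1 has_derivative (\<lambda>h. - (q'' t \<bullet> h))) (at (q t))"
    using orbit unfolding stark_periodic_orbit_def by blast
  have "reflected_newton_orbit G q q'"
  proof
    fix t assume "q t \<noteq> 0"
    then have "q t \<in> U - {0}" using inU by simp
    have "(stark_V V1 has_derivative (\<lambda>h. (- q'' t) \<bullet> h)) (at (q t))"
      using q''[OF \<open>q t \<noteq> 0\<close>] by simp
    then have "- q'' t = G (q t)" using dV[OF \<open>q t \<in> U - {0}\<close>] by (rule inner_has_derivative_unique)
    then have "q'' t = - G (q t)" by (metis minus_minus)
    then show "(q has_vector_derivative q' t) (at t) \<and> (q' has_vector_derivative - G (q t)) (at t)"
      using q''[OF \<open>q t \<noteq> 0\<close>] by simp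
    show "\<exists>e>0. \<exists>L. 0 \<notin> cball (q t) e \<and> L-lipschitz_on (cball (q t) e) G"
      using lip[OF \<open>q t \<in> U - {0}\<close>] by blast
  next
    fix t assume "q t = 0"
    then show "\<exists>e>0. \<forall>s. 0 < \<bar>s\<bar> \<and> \<bar>s\<bar> < e \<longrightarrow> q (t + s) = q (t - s)"
      using refl by meson
  qed (rule cont)
  then show ?thesis by blast
qed

lemma hill_bounded_subset_hill_region:
  assumes "good_energy U V1 c"
  shows "hill_bounded U V1 c \<subseteq> hill_region U V1 c"
proof -
  have "\<exists>!C. C \<in> components (hill_region U V1 c) \<and> bounded C"
    using assms by (simp add: good_energy_def)
  then have "hill_bounded U V1 c \<in> components (hill_region U V1 c)"
    unfolding hill_bounded_def by (rule theI'[THEN conjunct1])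
  then show ?thesis by (rule in_components_subset)
qed

lemma regular_level_point_in_frontier:
  assumes good: "good_energy U V1 c" and x: "x \<in> hill_bounded U V1 c" "x \<noteq> 0"
    and level: "stark_V V1 x = c"
  shows "x \<in> frontier (hill_bounded U V1 c)"
proof -
  have "x \<in> U" using hill_bounded_subset_hill_region[OF good] x by (auto simp: hill_region_def)
  then obtain D where D: "(stark_V V1 has_derivative D) (at x)" "D \<noteq> (\<lambda>h. 0)"
    using good x level by (auto simp: good_energy_def regular_value_def)
  have "x \<notin> interior (hill_bounded U V1 c)"
  proof
    assume "x \<in> interior (hill_bounded U V1 c)"
    moreover have "stark_V V1 y \<le> stark_V V1 x" if "y \<in> interior (hill_bounded U V1 c) - {0}" for y
      using that interior_subset hill_bounded_subset_hill_region[OF good] level by (auto simp: hill_region_def)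
    moreover have "open (interior (hill_bounded U V1 c) - {0})" by (simp add: open_delete)
    ultimately have "D = (\<lambda>h. 0)"
      using x(2) by (intro differential_zero_maxmin[OF _ _ D(1) disjI1]) auto
    then show False using D(2) by simp
  qed
  then show ?thesis using x(1) closure_subset by (auto simp: frontier_def)
qed

lemma stark_inverse_tangency_equal_speed:
  assumes orbit: "stark_periodic_orbit U V1 c T q q'"
    and "q t0 = q t1" "q t1 \<noteq> 0" "q' t1 \<noteq> 0" "0 < l" "q' t0 = - (l *\<^sub>R q' t1)"
  shows "q' t0 = - q' t1"
proof -
  have energy: "(norm (q' t))\<^sup>2 / 2 + stark_V V1 (q t) = c" if "q t \<noteq> 0" for t
    using orbit that unfolding stark_periodic_orbit_def by blast
  have "(norm (q' t0))\<^sup>2 / 2 + stark_V V1 (q t1) = c" "(norm (q' t1))\<^sup>2 / 2 + stark_V V1 (q t1) = c"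
    using energy[of t0] energy[of t1] assms(2,3) by auto
  then have "(norm (q' t0))\<^sup>2 = (norm (q' t1))\<^sup>2" by linarith
  then have "l * norm (q' t1) = norm (q' t1)" using assms(5,6) by (simp add: power2_eq_iff_nonneg)
  then show ?thesis using assms(4,6) by simp
qed

lemma inverse_self_tangency_everywhere:
  fixes q q' :: "real \<Rightarrow> 'a::real_normed_vector"
  assumes per: "\<And>t. q (t + T) = q t" and sym: "\<And>t. q (c - t) = q t"
    and vel: "\<And>t. q t \<noteq> 0 \<Longrightarrow> (q has_vector_derivative q' t) (at t)"
  shows "\<forall>t. q t \<noteq> 0 \<and> q' t \<noteq> 0 \<longrightarrow>
    (\<exists>t' l. \<not> (\<exists>k::int. t' - t = of_int k * T) \<and> q t' = q t \<and> l > 0 \<and> q' t = - (l *\<^sub>R q' t'))"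
proof (intro allI impI)
  fix t assume t: "q t \<noteq> 0 \<and> q' t \<noteq> 0"
  then have "q (c - t) \<noteq> 0" using sym by simp
  have vt: "(q has_vector_derivative q' t) (at t)" using vel t by blast
  have vct: "(q has_vector_derivative q' (c - t)) (at (c - t))" using vel \<open>q (c - t) \<noteq> 0\<close> .
  have rev: "q' t = - q' (c - t)" using sym vt vct by (rule vector_derivative_reflect_symmetric)
  have "\<not> (\<exists>k::int. c - t - t = of_int k * T)"
  proof
    assume "\<exists>k::int. c - t - t = of_int k * T"
    then obtain k :: int where k: "c - t = t + of_int k * T" by (auto simp: algebra_simps)
    have "q' t = q' (t + of_int k * T)"
      using periodic_int_multiple[where f=q, OF per] vt vct[unfolded k]
      by (rule vector_derivative_periodic)
    then have "q' t = - q' t" using rev k by simp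
    then show False using t by (simp add: eq_neg_iff_add_eq_0 flip: scaleR_2)
  qed
  then show "\<exists>t' l. \<not> (\<exists>k::int. t' - t = of_int k * T) \<and> q t' = q t \<and> l > 0 \<and>
      q' t = - (l *\<^sub>R q' t')"
    using rev sym by (intro exI[of _ "c - t"] exI[of _ "1::real"]) simp
qed

theorem mainTheorem1:
  fixes U :: "(real^2) set" and V1 :: "real^2 \<Rightarrow> real" and c :: real and c1 :: ereal
    and T :: real and q q' :: "real \<Rightarrow> real^2"
  assumes U_open: "open U" and U_zero: "0 \<in> U"
    and U_disk: "diffeomorphic_sets (closure U) (cball 0 1)"
    and V1_smooth: "smooth_on U V1"
    and c1_prop: "\<forall>c'. ereal c' < c1 \<longrightarrow> good_energy U V1 c'"
    and c_less: "ereal c < c1"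
    and orbit: "stark_periodic_orbit U V1 c T q q'"
    and in_hill: "\<forall>t. q t \<in> hill_bounded U V1 c"
    and tangency: "\<exists>t0 t1 l. \<not> (\<exists>k::int. t1 - t0 = of_int k * T) \<and>
        q t0 = q t1 \<and> q t1 \<noteq> 0 \<and> q' t1 \<noteq> 0 \<and> l > 0 \<and> q' t0 = - (l *\<^sub>R q' t1)"
  shows "(\<forall>t. q t \<noteq> 0 \<and> q' t \<noteq> 0 \<longrightarrow>
            (\<exists>t' l. \<not> (\<exists>k::int. t' - t = of_int k * T) \<and> q t' = q t \<and> l > 0 \<and>
                    q' t = - (l *\<^sub>R q' t')))
       \<and> ((\<exists>t. q t \<in> frontier (hill_bounded U V1 c)) \<or> (\<exists>t. q t = 0))"
proof -
  obtain G where "reflected_newton_orbit G q q'"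
    using stark_periodic_orbit_reflected_newton[OF U_open V1_smooth orbit] by blast
  then interpret reflected_newton_orbit G q q' .
  have per: "\<And>t. q (t + T) = q t"
    and energy: "\<And>t. q t \<noteq> 0 \<Longrightarrow> (norm (q' t))\<^sup>2 / 2 + stark_V V1 (q t) = c"
    using orbit unfolding stark_periodic_orbit_def by blast+
  have vel: "\<And>t. q t \<noteq> 0 \<Longrightarrow> (q has_vector_derivative q' t) (at t)"
    using newton by blast
  obtain t0 t1 l where tg: "q t0 = q t1" "q t1 \<noteq> 0" "q' t1 \<noteq> 0" "l > 0" "q' t0 = - (l *\<^sub>R q' t1)"
    using tangency by blast
  have "q' t0 = - q' t1" by (rule stark_inverse_tangency_equal_speed[OF orbit tg])
  note rev = tg(1,2) this
  have "\<forall>t. q t \<noteq> 0 \<and> q' t \<noteq> 0 \<longrightarrow>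
      (\<exists>t' l. \<not> (\<exists>k::int. t' - t = of_int k * T) \<and> q t' = q t \<and> l > 0 \<and> q' t = - (l *\<^sub>R q' t'))"
    using inverse_self_tangency_everywhere[OF per reversal_symmetry[OF rev] vel] .
  moreover have "q ((t0 + t1) / 2) \<in> frontier (hill_bounded U V1 c)" if "q ((t0 + t1) / 2) \<noteq> 0"
  proof (rule regular_level_point_in_frontier)
    show "good_energy U V1 c" using c1_prop c_less by blast
    have "q' ((t0 + t1) / 2) = 0" by (rule reversal_midpoint_at_rest[OF rev that])
    then show "stark_V V1 (q ((t0 + t1) / 2)) = c" using energy[OF that] by simp
  qed (use in_hill that in auto)
  ultimately show ?thesis by blast
qed

end
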